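(* In the general large financial market setting described in the context, (NAA1) holds if and only if (NUPBR) holds.
   Context: Let $(\Omega,\mathcal{F},(\mathcal{F}_t)_{t\in[0,1]},P)$ be a filtered probability space satisfying the usual conditions. Let $\mathbb{S}$ be the space of real-valued semimartingales on $[0,1]$ starting at $0$, with the Emery topology given by the metric $d_{\mathbb{S}}(X,Y)=\sup_{K}E[\sup_{t\leq 1}|(K\bullet(X-Y))_t|\wedge 1]$, supremum over simple predictable $K$ with $\|K\|_\infty\le 1$. Let $I\subseteq[0,\infty)$ and for each $n\ge1$ let $\mathcal{A}^n$ be a family of subsets of $I$ with exactly $n$ elements, such that $A^1,A^2\in\bigcup_{n}\mathcal{A}^n$ implies $A^1\cup A^2\in\bigcup_{n}\mathcal{A}^n$. For each $A\in\bigcup_n\mathcal{A}^n$ let $\mathcal{X}^A_1\subset\mathbb{S}$ be a convex set of semimartingales starting at $0$ with $X_t\ge -1$ for all $t$, satisfying: for all bounded predictable $H,G\ge0$ with $HG=0$ and $X,Y\in\mathcal{X}^A_1$ with $Z=(H\bullet X)+(G\bullet Y)\ge -1$, one has $Z\in\mathcal{X}^A_1$; and $A^1\subseteq A^2$ implies $\mathcal{X}^{A^1}_1\subset\mathcal{X}^{A^2}_1$. Set $\mathcal{X}^n_1=\bigcup_{A\in\mathcal{A}^n}\mathcal{X}^A_1$, $\mathcal{X}_1$ = Emery closure of $\bigcup_{n}\mathcal{X}^n_1$, and $K^1_0=\{X_1:X\in\mathcal{X}_1\}$. An asymptotic arbitrage of the first kind (AA1) exists if there are $\alpha>0$, sequences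 $\varepsilon_k\to0$ ($\varepsilon_k>0$), $c_k\to\infty$, and processes $X^k$ with $X^k\in\varepsilon_k\bigcup_{n\ge1}\mathcal{X}^n_1$ and $P[X^k_1\ge c_k]\ge\alpha$ for every $k$. (NAA1) means that no (AA1) exists. (NUPBR) means that $K^1_0$ is a bounded subset of $L^0$ (bounded in probability). *)

theory Defs
  imports "HOL-Probability.Probability"
begin

text \<open>Processes on the time interval [0,1] are modelled as functions
  real => 'a => real (values outside [0,1] are irrelevant).
  M is the probability space (Omega, F, P), Fl the filtration.\<close>

type_synonym 'a proc = "real \<Rightarrow> 'a \<Rightarrow> real"

definition usual_filtration :: "'a measure \<Rightarrow> (real \<Rightarrow> 'a measure) \<Rightarrow> bool" where
  "usual_filtration M Fl \<longleftrightarrow>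
     prob_space M \<and>
     (\<forall>t\<in>{0..1}. space (Fl t) = space M \<and> sets (Fl t) \<subseteq> sets M) \<and>
     (\<forall>s t. 0 \<le> s \<longrightarrow> s \<le> t \<longrightarrow> t \<le> 1 \<longrightarrow> sets (Fl s) \<subseteq> sets (Fl t)) \<and>
     \<comment> \<open>completeness of (Omega, F, P)\<close>
     (\<forall>A\<in>sets M. emeasure M A = 0 \<longrightarrow> (\<forall>B. B \<subseteq> A \<longrightarrow> B \<in> sets M)) \<and>
     \<comment> \<open>F_0 contains all P-null sets\<close>
     (\<forall>A\<in>sets M. emeasure M A = 0 \<longrightarrow> A \<in> sets (Fl 0)) \<and>
     \<comment> \<open>right-continuity\<close>
     (\<forall>t\<in>{0..<1}. sets (Fl t) = (\<Inter>s\<in>{t<..1}. sets (Fl s)))"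

definition adapted :: "'a measure \<Rightarrow> (real \<Rightarrow> 'a measure) \<Rightarrow> 'a proc \<Rightarrow> bool" where
  "adapted M Fl X \<longleftrightarrow> (\<forall>t\<in>{0..1}. X t \<in> borel_measurable (Fl t))"

definition cadlag :: "'a measure \<Rightarrow> 'a proc \<Rightarrow> bool" where
  "cadlag M X \<longleftrightarrow> (\<forall>\<omega>\<in>space M.
     (\<forall>t\<in>{0..<1}. ((\<lambda>s. X s \<omega>) \<longlongrightarrow> X t \<omega>) (at_right t)) \<and>
     (\<forall>t\<in>{0<..1}. \<exists>l. ((\<lambda>s. X s \<omega>) \<longlongrightarrow> l) (at_left t)))"

definition indist :: "'a measure \<Rightarrow> 'a proc \<Rightarrow> 'a proc \<Rightarrow> bool" where
  "indist M X Y \<longleftrightarrow> (AE \<omega> in M. \<forall>t\<in>{0..1}. X t \<omega> = Y t \<omega>)"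

definition bounded_L0 :: "'a measure \<Rightarrow> ('a \<Rightarrow> real) set \<Rightarrow> bool" where
  "bounded_L0 M K \<longleftrightarrow>
     (\<forall>e>0. \<exists>c. \<forall>f\<in>K. measure M {\<omega>\<in>space M. c < \<bar>f \<omega>\<bar>} \<le> e)"

definition simple_data ::
  "'a measure \<Rightarrow> (real \<Rightarrow> 'a measure) \<Rightarrow> nat \<Rightarrow> (nat \<Rightarrow> real) \<Rightarrow> (nat \<Rightarrow> 'a \<Rightarrow> real) \<Rightarrow> bool" where
  "simple_data M Fl n t h \<longleftrightarrow>
     0 \<le> t 0 \<and> t n \<le> 1 \<and> (\<forall>i<n. t i \<le> t (Suc i)) \<and>
     (\<forall>i<n. h i \<in> borel_measurable (Fl (t i)) \<and> (\<exists>C. \<forall>\<omega>\<in>space M. \<bar>h i \<omega>\<bar> \<le> C))"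

definition simple_proc ::
  "nat \<Rightarrow> (nat \<Rightarrow> real) \<Rightarrow> (nat \<Rightarrow> 'a \<Rightarrow> real) \<Rightarrow> ('a \<Rightarrow> real) \<Rightarrow> 'a proc" where
  "simple_proc n t h h0 = (\<lambda>s \<omega>. h0 \<omega> * indicator {0} s +
      (\<Sum>i<n. h i \<omega> * indicator {t i<..t (Suc i)} s))"

definition elem_int ::
  "nat \<Rightarrow> (nat \<Rightarrow> real) \<Rightarrow> (nat \<Rightarrow> 'a \<Rightarrow> real) \<Rightarrow> 'a proc \<Rightarrow> 'a proc" where
  "elem_int n t h X = (\<lambda>s \<omega>. \<Sum>i<n. h i \<omega> * (X (min (t (Suc i)) s) \<omega> - X (min (t i) s) \<omega>))"

text \<open>Semimartingales starting at 0 (good-integrator definition, Protter):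
  cadlag adapted processes with X_0 = 0 such that the elementary integrals of
  simple predictable integrands bounded by 1 form an L^0-bounded set.\<close>
definition semimart :: "'a measure \<Rightarrow> (real \<Rightarrow> 'a measure) \<Rightarrow> 'a proc \<Rightarrow> bool" where
  "semimart M Fl X \<longleftrightarrow> cadlag M X \<and> adapted M Fl X \<and> (\<forall>\<omega>\<in>space M. X 0 \<omega> = 0) \<and>
     bounded_L0 M {elem_int n t h X 1 | n t h.
        simple_data M Fl n t h \<and> (\<forall>i<n. \<forall>\<omega>\<in>space M. \<bar>h i \<omega>\<bar> \<le> 1)}"

definition semimarts :: "'a measure \<Rightarrow> (real \<Rightarrow> 'a measure) \<Rightarrow> 'a proc set" where
  "semimarts M Fl = {X. semimart M Fl X}"

definition emery_dist :: "'a measure \<Rightarrow> (real \<Rightarrow> 'a measure) \<Rightarrow> 'a proc \<Rightarrow> 'a proc \<Rightarrow> real" where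
  "emery_dist M Fl X Y =
     (SUP K \<in> {(n, t, h). simple_data M Fl n t h \<and> (\<forall>i<n. \<forall>\<omega>\<in>space M. \<bar>h i \<omega>\<bar> \<le> 1)}.
        (case K of (n, t, h) \<Rightarrow>
          integral\<^sup>L M (\<lambda>\<omega>. SUP s\<in>{0..1}.
             min \<bar>elem_int n t h (\<lambda>r \<omega>'. X r \<omega>' - Y r \<omega>') s \<omega>\<bar> 1)))"

definition emery_closure :: "'a measure \<Rightarrow> (real \<Rightarrow> 'a measure) \<Rightarrow> 'a proc set \<Rightarrow> 'a proc set" where
  "emery_closure M Fl U =
     {X \<in> semimarts M Fl. \<forall>e>0. \<exists>Y\<in>U. emery_dist M Fl X Y < e}"

definition pred_sigma :: "'a measure \<Rightarrow> (real \<Rightarrow> 'a measure) \<Rightarrow> (real \<times> 'a) measure" where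
  "pred_sigma M Fl = sigma ({0..1} \<times> space M)
     ({{0} \<times> A | A. A \<in> sets (Fl 0)} \<union>
      {{s<..t} \<times> A | s t A. 0 \<le> s \<and> s \<le> t \<and> t \<le> 1 \<and> A \<in> sets (Fl s)})"

definition bdd_pred :: "'a measure \<Rightarrow> (real \<Rightarrow> 'a measure) \<Rightarrow> 'a proc \<Rightarrow> bool" where
  "bdd_pred M Fl H \<longleftrightarrow> (\<lambda>(s, \<omega>). H s \<omega>) \<in> borel_measurable (pred_sigma M Fl) \<and>
     (\<exists>C. \<forall>s\<in>{0..1}. \<forall>\<omega>\<in>space M. \<bar>H s \<omega>\<bar> \<le> C)"

text \<open>ucp distance (metrizes uniform convergence on [0,1] in probability).\<close>
definition ucp_dist :: "'a measure \<Rightarrow> 'a proc \<Rightarrow> 'a proc \<Rightarrow> real" where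
  "ucp_dist M X Y = integral\<^sup>L M (\<lambda>\<omega>. SUP s\<in>{0..1}. min \<bar>X s \<omega> - Y s \<omega>\<bar> 1)"

text \<open>By the monotone class theorem such a map is unique up to indistinguishability,
  and for semimartingales it exists.  stoch_int M Fl X H Z means that Z is a
  (cadlag adapted, null at 0) version of H . X.\<close>
definition int_map :: "'a measure \<Rightarrow> (real \<Rightarrow> 'a measure) \<Rightarrow> 'a proc \<Rightarrow> ('a proc \<Rightarrow> 'a proc) \<Rightarrow> bool" where
  "int_map M Fl X I \<longleftrightarrow>
     (\<forall>H. bdd_pred M Fl H \<longrightarrow> cadlag M (I H) \<and> adapted M Fl (I H)) \<and>
     (\<forall>n t h h0. simple_data M Fl n t h \<longrightarrow> h0 \<in> borel_measurable (Fl 0) \<longrightarrow>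
         (\<exists>C. \<forall>\<omega>\<in>space M. \<bar>h0 \<omega>\<bar> \<le> C) \<longrightarrow>
         indist M (I (simple_proc n t h h0)) (elem_int n t h X)) \<and>
     (\<forall>a b H G. bdd_pred M Fl H \<longrightarrow> bdd_pred M Fl G \<longrightarrow>
         indist M (I (\<lambda>s \<omega>. a * H s \<omega> + b * G s \<omega>)) (\<lambda>s \<omega>. a * I H s \<omega> + b * I G s \<omega>)) \<and>
     (\<forall>Hs H. (\<forall>k. bdd_pred M Fl (Hs k)) \<longrightarrow> bdd_pred M Fl H \<longrightarrow>
         (\<exists>C. \<forall>k. \<forall>s\<in>{0..1}. \<forall>\<omega>\<in>space M. \<bar>Hs k s \<omega>\<bar> \<le> C) \<longrightarrow>
         (\<forall>s\<in>{0..1}. \<forall>\<omega>\<in>space M. (\<lambda>k. Hs k s \<omega>) \<longlonglongrightarrow> H s \<omega>) \<longrightarrow>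
         (\<lambda>k. ucp_dist M (I (Hs k)) (I H)) \<longlonglongrightarrow> 0)"

definition stoch_int :: "'a measure \<Rightarrow> (real \<Rightarrow> 'a measure) \<Rightarrow> 'a proc \<Rightarrow> 'a proc \<Rightarrow> 'a proc \<Rightarrow> bool" where
  "stoch_int M Fl X H Z \<longleftrightarrow> cadlag M Z \<and> adapted M Fl Z \<and> (\<forall>\<omega>\<in>space M. Z 0 \<omega> = 0) \<and>
     (\<exists>I. int_map M Fl X I \<and> indist M (I H) Z)"

definition market_setting ::
  "'a measure \<Rightarrow> (real \<Rightarrow> 'a measure) \<Rightarrow> real set \<Rightarrow> (nat \<Rightarrow> real set set)
     \<Rightarrow> (real set \<Rightarrow> 'a proc set) \<Rightarrow> bool" where
  "market_setting M Fl I \<A> \<X> \<longleftrightarrow>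
     usual_filtration M Fl \<and> I \<subseteq> {0..} \<and>
     (\<forall>n\<ge>1. \<forall>A\<in>\<A> n. A \<subseteq> I \<and> finite A \<and> card A = n) \<and>
     (\<forall>A1\<in>(\<Union>n\<in>{1..}. \<A> n). \<forall>A2\<in>(\<Union>n\<in>{1..}. \<A> n). A1 \<union> A2 \<in> (\<Union>n\<in>{1..}. \<A> n)) \<and>
     (\<forall>A\<in>(\<Union>n\<in>{1..}. \<A> n).
        \<X> A \<subseteq> semimarts M Fl \<and>
        (\<forall>X\<in>\<X> A. \<forall>t\<in>{0..1}. \<forall>\<omega>\<in>space M. X t \<omega> \<ge> -1) \<and>
        (\<forall>X\<in>\<X> A. \<forall>Y\<in>\<X> A. \<forall>u\<in>{0..1::real}.
            (\<lambda>t \<omega>. u * X t \<omega> + (1 - u) * Y t \<omega>) \<in> \<X> A) \<and>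
        (\<forall>H G X Y Z1 Z2. bdd_pred M Fl H \<longrightarrow> bdd_pred M Fl G \<longrightarrow>
            (\<forall>s\<in>{0..1}. \<forall>\<omega>\<in>space M. H s \<omega> \<ge> 0 \<and> G s \<omega> \<ge> 0 \<and> H s \<omega> * G s \<omega> = 0) \<longrightarrow>
            X \<in> \<X> A \<longrightarrow> Y \<in> \<X> A \<longrightarrow>
            stoch_int M Fl X H Z1 \<longrightarrow> stoch_int M Fl Y G Z2 \<longrightarrow>
            (\<forall>t\<in>{0..1}. \<forall>\<omega>\<in>space M. Z1 t \<omega> + Z2 t \<omega> \<ge> -1) \<longrightarrow>
            (\<lambda>t \<omega>. Z1 t \<omega> + Z2 t \<omega>) \<in> \<X> A)) \<and>
     (\<forall>A1\<in>(\<Union>n\<in>{1..}. \<A> n). \<forall>A2\<in>(\<Union>n\<in>{1..}. \<A> n). A1 \<subseteq> A2 \<longrightarrow> \<X> A1 \<subseteq> \<X> A2)"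

definition Xn :: "(nat \<Rightarrow> real set set) \<Rightarrow> (real set \<Rightarrow> 'a proc set) \<Rightarrow> nat \<Rightarrow> 'a proc set" where
  "Xn \<A> \<X> n = (\<Union>A\<in>\<A> n. \<X> A)"

definition X1 :: "'a measure \<Rightarrow> (real \<Rightarrow> 'a measure) \<Rightarrow> (nat \<Rightarrow> real set set)
     \<Rightarrow> (real set \<Rightarrow> 'a proc set) \<Rightarrow> 'a proc set" where
  "X1 M Fl \<A> \<X> = emery_closure M Fl (\<Union>n\<in>{1..}. Xn \<A> \<X> n)"

definition K10 :: "'a measure \<Rightarrow> (real \<Rightarrow> 'a measure) \<Rightarrow> (nat \<Rightarrow> real set set)
     \<Rightarrow> (real set \<Rightarrow> 'a proc set) \<Rightarrow> ('a \<Rightarrow> real) set" where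
  "K10 M Fl \<A> \<X> = (\<lambda>X. X 1) ` X1 M Fl \<A> \<X>"

definition AA1 :: "'a measure \<Rightarrow> (nat \<Rightarrow> real set set) \<Rightarrow> (real set \<Rightarrow> 'a proc set) \<Rightarrow> bool" where
  "AA1 M \<A> \<X> \<longleftrightarrow> (\<exists>\<alpha>>0. \<exists>\<epsilon> c Xs.
     (\<forall>k. \<epsilon> k > (0::real)) \<and> \<epsilon> \<longlonglongrightarrow> 0 \<and> filterlim (c :: nat \<Rightarrow> real) at_top sequentially \<and>
     (\<forall>k. \<exists>Y\<in>(\<Union>n\<in>{1..}. Xn \<A> \<X> n). Xs k = (\<lambda>t \<omega>. \<epsilon> k * Y t \<omega>)) \<and>
     (\<forall>k. measure M {\<omega>\<in>space M. Xs k 1 \<omega> \<ge> c k} \<ge> \<alpha>))"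

definition NAA1 :: "'a measure \<Rightarrow> (nat \<Rightarrow> real set set) \<Rightarrow> (real set \<Rightarrow> 'a proc set) \<Rightarrow> bool" where
  "NAA1 M \<A> \<X> \<longleftrightarrow> \<not> AA1 M \<A> \<X>"

definition NUPBR :: "'a measure \<Rightarrow> (real \<Rightarrow> 'a measure) \<Rightarrow> (nat \<Rightarrow> real set set)
     \<Rightarrow> (real set \<Rightarrow> 'a proc set) \<Rightarrow> bool" where
  "NUPBR M Fl \<A> \<X> \<longleftrightarrow> bounded_L0 M (K10 M Fl \<A> \<X>)"

end

theory Submission
  imports Defs
begin

text \<open>If the wealth processes had an AA1, rescaling them by epsilon_k gives terminal
  values exceeding c_k/epsilon_k with probability alpha, so K_0^1 cannot be bounded in
  probability.  Conversely, if K_0^1 is unbounded, then elements of the Emery closure with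
  large terminal values can be approximated by genuine wealth processes Y: closeness in the
  Emery metric controls P(|X_1 - Y_1| >= 1), and Y >= -1 rules out large negative values.
  Scaling such Y by 1/(k+1) produces an AA1.\<close>

lemma semimart_measurable:
  assumes "usual_filtration M Fl" and "semimart M Fl X" and "t \<in> {0..1}"
  shows "X t \<in> borel_measurable M"
proof -
  have "X t \<in> borel_measurable (Fl t)"
    using assms(2,3) unfolding semimart_def adapted_def by auto
  moreover have "sets (Fl t) \<subseteq> sets M" "space (Fl t) = space M"
    using assms(1,3) unfolding usual_filtration_def by auto
  ultimately show ?thesis using measurable_mono[of borel borel "Fl t" M] by auto
qed

text \<open>Countability of the index set on the right makes suprema of cadlag paths measurable.\<close>
lemma cSUP_right_continuous_eq_rationals:
  fixes f :: "real \<Rightarrow> real"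
  assumes rc: "\<forall>t\<in>{0..<1}. (f \<longlongrightarrow> f t) (at_right t)"
    and bd: "bdd_above (f ` {0..1})"
  shows "(SUP s\<in>{0..1}. f s) = (SUP s\<in>(\<rat> \<inter> {0..<1}) \<union> {1}. f s)"
proof (rule antisym)
  let ?D = "(\<rat> \<inter> {0..<1}) \<union> {1::real}"
  have bdD: "bdd_above (f ` ?D)" by (rule bdd_above_mono[OF bd]) auto
  show "(SUP s\<in>{0..1}. f s) \<le> (SUP s\<in>?D. f s)"
  proof (rule cSUP_least)
    fix s :: real assume s: "s \<in> {0..1}"
    show "f s \<le> (SUP s\<in>?D. f s)"
    proof (cases "s = 1")
      case True then show ?thesis by (intro cSUP_upper[OF _ bdD]) simp
    next
      case False
      with s have s1: "s \<in> {0..<1}" by auto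
      show ?thesis
      proof (rule ccontr)
        assume "\<not> ?thesis"
        then have "(SUP s\<in>?D. f s) < f s" by simp
        from order_tendstoD(1)[OF rc[rule_format, OF s1] this]
        obtain b where b: "b > s" "\<And>y. s < y \<Longrightarrow> y < b \<Longrightarrow> (SUP s\<in>?D. f s) < f y"
          unfolding eventually_at_right_field by auto
        have "s < min b 1" using b s1 by auto
        then obtain q where q: "q \<in> \<rat>" "s < q" "q < min b 1" using Rats_dense_in_real by blast
        then have "f q \<le> (SUP s\<in>?D. f s)" using s1 by (intro cSUP_upper[OF _ bdD]) auto
        moreover have "(SUP s\<in>?D. f s) < f q" using b q by auto
        ultimately show False by simp
      qed
    qed
  qed simp
  show "(SUP s\<in>?D. f s) \<le> (SUP s\<in>{0..1}. f s)"
    by (rule cSUP_subset_mono) (use bd in auto)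
qed

text \<open>The integral of a possibly non-measurable function is 0 by convention, so
  no integrability hypothesis is needed.\<close>
lemma (in prob_space) integral_le_one:
  assumes "\<And>x. f x \<le> (1::real)"
  shows "integral\<^sup>L M f \<le> 1"
proof (rule integral_real_bounded)
  have "integral\<^sup>N M f \<le> integral\<^sup>N M (\<lambda>_. 1)"
    by (rule nn_integral_mono) (use assms in \<open>simp add: ennreal_leI\<close>)
  then show "integral\<^sup>N M f \<le> ennreal 1" by (simp add: emeasure_space_1)
qed simp

lemma cSUP_min_one_le_one: "(SUP s\<in>{0..1::real}. min (g s) (1::real)) \<le> 1"
  by (rule cSUP_least) auto

lemma ucp_dist_le_emery_dist:
  assumes "usual_filtration M Fl" and X: "semimart M Fl X" and Y: "semimart M Fl Y"
  shows "ucp_dist M X Y \<le> emery_dist M Fl X Y"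
proof -
  interpret prob_space M using assms(1) unfolding usual_filtration_def by auto
  define t :: "nat \<Rightarrow> real" where "t = (\<lambda>i. if i = 0 then 0 else 1)"
  define h :: "nat \<Rightarrow> 'a \<Rightarrow> real" where "h = (\<lambda>i \<omega>. 1)"
  let ?S = "{(n, t, h). simple_data M Fl n t h \<and> (\<forall>i<n. \<forall>\<omega>\<in>space M. \<bar>h i \<omega>\<bar> \<le> 1)}"
  let ?F = "\<lambda>K. (case K of (n, t, h) \<Rightarrow>
          integral\<^sup>L M (\<lambda>\<omega>. SUP s\<in>{0..1}.
             min \<bar>elem_int n t h (\<lambda>r \<omega>'. X r \<omega>' - Y r \<omega>') s \<omega>\<bar> 1))"
  have K: "(1::nat, t, h) \<in> ?S"
    unfolding simple_data_def t_def h_def by auto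
  have "bdd_above (?F ` ?S)"
    by (rule bdd_aboveI[where M=1]) (auto intro!: integral_le_one cSUP_min_one_le_one)
  from cSUP_upper[OF K this] have "?F (1, t, h) \<le> emery_dist M Fl X Y"
    unfolding emery_dist_def .
  \<comment> \<open>the integrand 1 on (0,1] recovers X - Y itself, as both start at 0\<close>
  moreover have "elem_int 1 t h (\<lambda>r \<omega>'. X r \<omega>' - Y r \<omega>') s \<omega> = X s \<omega> - Y s \<omega>"
    if "\<omega> \<in> space M" "s \<in> {0..1}" for \<omega> s
    using that X Y unfolding elem_int_def t_def h_def semimart_def by auto
  then have "(SUP s\<in>{0..1}. min \<bar>elem_int 1 t h (\<lambda>r \<omega>'. X r \<omega>' - Y r \<omega>') s \<omega>\<bar> 1)
      = (SUP s\<in>{0..1}. min \<bar>X s \<omega> - Y s \<omega>\<bar> 1)" if "\<omega> \<in> space M" for \<omega>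
    using that by (intro SUP_cong) auto
  then have "?F (1, t, h) = ucp_dist M X Y"
    unfolding ucp_dist_def by (auto intro: Bochner_Integration.integral_cong)
  ultimately show ?thesis by simp
qed

lemma ucp_sup_measurable:
  assumes uf: "usual_filtration M Fl" and X: "semimart M Fl X" and Y: "semimart M Fl Y"
  shows "(\<lambda>\<omega>. SUP s\<in>{0..1}. min \<bar>X s \<omega> - Y s \<omega>\<bar> 1) \<in> borel_measurable M"
proof (rule measurable_cong[THEN iffD2])
  let ?D = "(\<rat> \<inter> {0..<1}) \<union> {1::real}"
  show "(SUP s\<in>{0..1}. min \<bar>X s \<omega> - Y s \<omega>\<bar> 1) = (SUP s\<in>?D. min \<bar>X s \<omega> - Y s \<omega>\<bar> 1)"
    if \<omega>: "\<omega> \<in> space M" for \<omega>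
  proof (rule cSUP_right_continuous_eq_rationals)
    show "\<forall>t\<in>{0..<1}. ((\<lambda>s. min \<bar>X s \<omega> - Y s \<omega>\<bar> 1) \<longlongrightarrow> min \<bar>X t \<omega> - Y t \<omega>\<bar> 1) (at_right t)"
      using X Y \<omega> unfolding semimart_def cadlag_def by (auto intro!: tendsto_intros)
  qed (auto intro!: bdd_aboveI[where M=1])
  have [measurable]: "X s \<in> borel_measurable M" "Y s \<in> borel_measurable M" if "s \<in> ?D" for s
    using semimart_measurable[OF uf X] semimart_measurable[OF uf Y] that by auto
  show "(\<lambda>\<omega>. SUP s\<in>?D. min \<bar>X s \<omega> - Y s \<omega>\<bar> 1) \<in> borel_measurable M"
    by (rule borel_measurable_cSUP) (auto simp: countable_rat intro!: bdd_aboveI[where M=1])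
qed

lemma measure_terminal_dist_ge_one_le_ucp_dist:
  assumes uf: "usual_filtration M Fl" and X: "semimart M Fl X" and Y: "semimart M Fl Y"
  shows "measure M {\<omega>\<in>space M. 1 \<le> \<bar>X 1 \<omega> - Y 1 \<omega>\<bar>} \<le> ucp_dist M X Y"
proof -
  interpret prob_space M using uf unfolding usual_filtration_def by auto
  define g where "g = (\<lambda>\<omega>. SUP s\<in>{0..1::real}. min \<bar>X s \<omega> - Y s \<omega>\<bar> 1)"
  have g_upper: "min \<bar>X s \<omega> - Y s \<omega>\<bar> 1 \<le> g \<omega>" if "s \<in> {0..1}" for s \<omega>
    unfolding g_def using that by (intro cSUP_upper) (auto intro!: bdd_aboveI[where M=1])
  have g_int: "integrable M g"
  proof (rule integrable_const_bound[where B=1])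
    show "g \<in> borel_measurable M" unfolding g_def by (rule ucp_sup_measurable[OF uf X Y])
    have "0 \<le> g \<omega>" "g \<omega> \<le> 1" for \<omega>
      using g_upper[of 0 \<omega>] cSUP_min_one_le_one unfolding g_def by auto
    then show "AE \<omega> in M. norm (g \<omega>) \<le> 1" by simp
  qed
  have [measurable]: "X 1 \<in> borel_measurable M" "Y 1 \<in> borel_measurable M"
    using semimart_measurable[OF uf X] semimart_measurable[OF uf Y] by auto
  have min_int: "integrable M (\<lambda>\<omega>. min \<bar>X 1 \<omega> - Y 1 \<omega>\<bar> 1)"
    by (rule integrable_const_bound[where B=1]) auto
  let ?A = "{\<omega>\<in>space M. 1 \<le> \<bar>X 1 \<omega> - Y 1 \<omega>\<bar>}"
  have A: "?A \<in> sets M" by measurable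
  then have "measure M ?A = integral\<^sup>L M (indicator ?A)" by simp
  also have "\<dots> \<le> integral\<^sup>L M (\<lambda>\<omega>. min \<bar>X 1 \<omega> - Y 1 \<omega>\<bar> 1)"
    using A by (intro integral_mono[OF _ min_int])
      (auto intro!: integrable_real_indicator simp: emeasure_eq_measure split: split_indicator)
  also have "\<dots> \<le> integral\<^sup>L M g"
    using g_upper[of 1] by (intro integral_mono[OF min_int g_int]) auto
  finally show ?thesis unfolding ucp_dist_def g_def .
qed

lemma measure_terminal_dist_ge_one_le_emery_dist:
  assumes "usual_filtration M Fl" and "semimart M Fl X" and "semimart M Fl Y"
  shows "measure M {\<omega>\<in>space M. 1 \<le> \<bar>X 1 \<omega> - Y 1 \<omega>\<bar>} \<le> emery_dist M Fl X Y"
  using measure_terminal_dist_ge_one_le_ucp_dist[OF assms] ucp_dist_le_emery_dist[OF assms]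
  by linarith

lemma emery_dist_self: "emery_dist M Fl Y Y = 0"
proof -
  let ?S = "{(n, t, h). simple_data M Fl n t h \<and> (\<forall>i<n. \<forall>\<omega>\<in>space M. \<bar>h i \<omega>\<bar> \<le> 1)}"
  have "((0::nat), (\<lambda>_. 0::real), (\<lambda>_ _. 0::real)) \<in> ?S" unfolding simple_data_def by auto
  moreover have "emery_dist M Fl Y Y = (SUP K\<in>?S. (0::real))"
    unfolding emery_dist_def elem_int_def by (intro SUP_cong) auto
  ultimately show ?thesis by (subst (asm) cSUP_const) auto
qed

lemma semimart_in_emery_closure:
  assumes "semimart M Fl Y" and "Y \<in> U"
  shows "Y \<in> emery_closure M Fl U"
  using assms unfolding emery_closure_def semimarts_def by (auto simp: emery_dist_self intro!: bexI[of _ Y])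

text \<open>Since Y >= -1 and |X_1 - Y_1| < 1 outside the second event, X_1 cannot be very
  negative there, so a large |X_1| forces a large Y_1.\<close>
lemma measure_large_terminal_le:
  assumes uf: "usual_filtration M Fl" and X: "semimart M Fl X" and Y: "semimart M Fl Y"
    and Y_ge: "\<forall>\<omega>\<in>space M. Y 1 \<omega> \<ge> -1" and "c \<ge> 0"
  shows "measure M {\<omega>\<in>space M. c + 2 < \<bar>X 1 \<omega>\<bar>}
           \<le> measure M {\<omega>\<in>space M. c \<le> Y 1 \<omega>} + emery_dist M Fl X Y"
proof -
  interpret prob_space M using uf unfolding usual_filtration_def by auto
  have [measurable]: "X 1 \<in> borel_measurable M" "Y 1 \<in> borel_measurable M"
    using semimart_measurable[OF uf X] semimart_measurable[OF uf Y] by auto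
  let ?B = "{\<omega>\<in>space M. c \<le> Y 1 \<omega>}" and ?C = "{\<omega>\<in>space M. 1 \<le> \<bar>X 1 \<omega> - Y 1 \<omega>\<bar>}"
  have "{\<omega>\<in>space M. c + 2 < \<bar>X 1 \<omega>\<bar>} \<subseteq> ?B \<union> ?C"
    using Y_ge \<open>c \<ge> 0\<close> by force
  then have "measure M {\<omega>\<in>space M. c + 2 < \<bar>X 1 \<omega>\<bar>} \<le> measure M (?B \<union> ?C)"
    by (intro finite_measure_mono) auto
  also have "\<dots> \<le> measure M ?B + measure M ?C"
    by (intro measure_subadditive) auto
  finally show ?thesis
    using measure_terminal_dist_ge_one_le_emery_dist[OF uf X Y] by linarith
qed

lemma market_setting_wealth:
  assumes "market_setting M Fl I \<A> \<X>" and "Y \<in> (\<Union>n\<in>{1..}. Xn \<A> \<X> n)"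
  shows "semimart M Fl Y" and "\<forall>t\<in>{0..1}. \<forall>\<omega>\<in>space M. Y t \<omega> \<ge> -1"
proof -
  from assms(2) obtain n A where "n \<ge> 1" "A \<in> \<A> n" "Y \<in> \<X> A" unfolding Xn_def by auto
  then show "semimart M Fl Y" "\<forall>t\<in>{0..1}. \<forall>\<omega>\<in>space M. Y t \<omega> \<ge> -1"
    using assms(1) unfolding market_setting_def semimarts_def by blast+
qed

lemma market_setting_terminal_in_K10:
  assumes "market_setting M Fl I \<A> \<X>" and "Y \<in> (\<Union>n\<in>{1..}. Xn \<A> \<X> n)"
  shows "Y 1 \<in> K10 M Fl \<A> \<X>"
  using semimart_in_emery_closure[OF market_setting_wealth(1)[OF assms] assms(2)]
  unfolding K10_def X1_def by auto

lemma AA1_of_large_terminal_values: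
  assumes "\<alpha> > 0"
    and large: "\<And>k. \<exists>Y\<in>(\<Union>n\<in>{1..}. Xn \<A> \<X> n).
                   measure M {\<omega>\<in>space M. real k * real (Suc k) \<le> Y 1 \<omega>} \<ge> \<alpha>"
  shows "AA1 M \<A> \<X>"
proof -
  obtain Y where Y: "\<And>k. Y k \<in> (\<Union>n\<in>{1..}. Xn \<A> \<X> n)"
    and Y_large: "\<And>k. measure M {\<omega>\<in>space M. real k * real (Suc k) \<le> Y k 1 \<omega>} \<ge> \<alpha>"
    using large by metis
  define \<epsilon> :: "nat \<Rightarrow> real" where "\<epsilon> k = inverse (real (Suc k))" for k
  have "{\<omega>\<in>space M. real k \<le> \<epsilon> k * Y k 1 \<omega>}
        = {\<omega>\<in>space M. real k * real (Suc k) \<le> Y k 1 \<omega>}" for k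
    unfolding \<epsilon>_def by (auto simp: field_simps)
  then have scaled_large: "\<forall>k. measure M {\<omega>\<in>space M. real k \<le> \<epsilon> k * Y k 1 \<omega>} \<ge> \<alpha>"
    using Y_large by simp
  have \<epsilon>: "\<forall>k. \<epsilon> k > 0" "\<epsilon> \<longlonglongrightarrow> 0"
    unfolding \<epsilon>_def using LIMSEQ_inverse_real_of_nat by auto
  have scaled_wealth: "\<forall>k. \<exists>Y'\<in>(\<Union>n\<in>{1..}. Xn \<A> \<X> n). (\<lambda>t \<omega>. \<epsilon> k * Y k t \<omega>) = (\<lambda>t \<omega>. \<epsilon> k * Y' t \<omega>)"
  proof
    fix k show "\<exists>Y'\<in>(\<Union>n\<in>{1..}. Xn \<A> \<X> n). (\<lambda>t \<omega>. \<epsilon> k * Y k t \<omega>) = (\<lambda>t \<omega>. \<epsilon> k * Y' t \<omega>)"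
      using Y[of k] by (intro bexI[of _ "Y k"]) auto
  qed
  show ?thesis
    unfolding AA1_def
    by (rule exI[of _ \<alpha>], rule conjI[OF \<open>\<alpha> > 0\<close>], rule exI[of _ \<epsilon>], rule exI[of _ real],
        rule exI[of _ "\<lambda>k t \<omega>. \<epsilon> k * Y k t \<omega>"])
       (intro conjI \<epsilon> scaled_large scaled_wealth filterlim_real_sequentially)
qed

lemma not_NUPBR_imp_AA1:
  assumes ms: "market_setting M Fl I \<A> \<X>" and "\<not> NUPBR M Fl \<A> \<X>"
  shows "AA1 M \<A> \<X>"
proof -
  have uf: "usual_filtration M Fl" using ms unfolding market_setting_def by auto
  obtain e where "e > 0" and unbounded:
    "\<And>c. \<exists>X\<in>X1 M Fl \<A> \<X>. measure M {\<omega>\<in>space M. c < \<bar>X 1 \<omega>\<bar>} > e"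
    using assms(2) unfolding NUPBR_def bounded_L0_def K10_def by (auto simp: not_le)
  show ?thesis
  proof (rule AA1_of_large_terminal_values)
    show "e/2 > 0" using \<open>e > 0\<close> by simp
    fix k
    let ?c = "real k * real (Suc k)"
    obtain X where X: "X \<in> X1 M Fl \<A> \<X>" and X_large: "measure M {\<omega>\<in>space M. ?c + 2 < \<bar>X 1 \<omega>\<bar>} > e"
      using unbounded by blast
    have "semimart M Fl X" and "\<forall>d>0. \<exists>Y\<in>(\<Union>n\<in>{1..}. Xn \<A> \<X> n). emery_dist M Fl X Y < d"
      using X unfolding X1_def emery_closure_def semimarts_def by auto
    then obtain Y where Y: "Y \<in> (\<Union>n\<in>{1..}. Xn \<A> \<X> n)" and "emery_dist M Fl X Y < e/2"
      using \<open>e > 0\<close> by (meson half_gt_zero)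
    have "measure M {\<omega>\<in>space M. ?c + 2 < \<bar>X 1 \<omega>\<bar>}
        \<le> measure M {\<omega>\<in>space M. ?c \<le> Y 1 \<omega>} + emery_dist M Fl X Y"
      using market_setting_wealth(2)[OF ms Y]
      by (intro measure_large_terminal_le[OF uf \<open>semimart M Fl X\<close> market_setting_wealth(1)[OF ms Y]]) auto
    with X_large \<open>emery_dist M Fl X Y < e/2\<close>
    have "e/2 \<le> measure M {\<omega>\<in>space M. ?c \<le> Y 1 \<omega>}" by linarith
    with Y show "\<exists>Y\<in>(\<Union>n\<in>{1..}. Xn \<A> \<X> n). measure M {\<omega>\<in>space M. ?c \<le> Y 1 \<omega>} \<ge> e/2"
      by blast
  qed
qed

lemma NUPBR_imp_NAA1:
  assumes ms: "market_setting M Fl I \<A> \<X>" and "NUPBR M Fl \<A> \<X>"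
  shows "NAA1 M \<A> \<X>"
  unfolding NAA1_def
proof
  assume "AA1 M \<A> \<X>"
  then obtain \<alpha> \<epsilon> c Xs where "\<alpha> > 0" and \<epsilon>_pos: "\<And>k. \<epsilon> k > (0::real)" and "\<epsilon> \<longlonglongrightarrow> 0"
    and "filterlim (c :: nat \<Rightarrow> real) at_top sequentially"
    and Xs: "\<And>k. \<exists>Y\<in>(\<Union>n\<in>{1..}. Xn \<A> \<X> n). Xs k = (\<lambda>t \<omega>. \<epsilon> k * Y t \<omega>)"
    and Xs_large: "\<And>k. measure M {\<omega>\<in>space M. Xs k 1 \<omega> \<ge> c k} \<ge> \<alpha>"
    unfolding AA1_def by blast
  obtain c0 where c0: "\<And>f. f \<in> K10 M Fl \<A> \<X> \<Longrightarrow> measure M {\<omega>\<in>space M. c0 < \<bar>f \<omega>\<bar>} \<le> \<alpha>/2"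
    using assms(2) \<open>\<alpha> > 0\<close> unfolding NUPBR_def bounded_L0_def by (meson half_gt_zero)
  have "eventually (\<lambda>k. \<epsilon> k < 1 \<and> c k > \<bar>c0\<bar>) sequentially"
    using order_tendstoD(2)[OF \<open>\<epsilon> \<longlonglongrightarrow> 0\<close>, of 1] \<open>filterlim c at_top sequentially\<close>
    by (auto simp: filterlim_at_top_dense intro: eventually_conj)
  then obtain k where "\<epsilon> k < 1" "c k > \<bar>c0\<bar>"
    using eventually_sequentially by auto
  obtain Y where Y: "Y \<in> (\<Union>n\<in>{1..}. Xn \<A> \<X> n)" and Xs_k: "Xs k = (\<lambda>t \<omega>. \<epsilon> k * Y t \<omega>)"
    using Xs by blast
  have uf: "usual_filtration M Fl" using ms unfolding market_setting_def by auto
  interpret prob_space M using uf unfolding usual_filtration_def by auto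
  from semimart_measurable[OF uf market_setting_wealth(1)[OF ms Y], of 1]
  have [measurable]: "Y 1 \<in> borel_measurable M" by simp
  have "\<epsilon> k * \<bar>c0\<bar> < \<epsilon> k * Y 1 \<omega>" if "\<epsilon> k * Y 1 \<omega> \<ge> c k" for \<omega>
    using that \<open>\<epsilon> k < 1\<close> \<open>c k > \<bar>c0\<bar>\<close> \<epsilon>_pos[of k] mult_left_le_one_le[of "\<bar>c0\<bar>" "\<epsilon> k"]
    by linarith
  then have "c0 < \<bar>Y 1 \<omega>\<bar>" if "\<epsilon> k * Y 1 \<omega> \<ge> c k" for \<omega>
    using that \<epsilon>_pos[of k] by (fastforce simp: mult_less_cancel_left_pos)
  then have "{\<omega>\<in>space M. Xs k 1 \<omega> \<ge> c k} \<subseteq> {\<omega>\<in>space M. c0 < \<bar>Y 1 \<omega>\<bar>}"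
    unfolding Xs_k by blast
  then have "measure M {\<omega>\<in>space M. Xs k 1 \<omega> \<ge> c k} \<le> measure M {\<omega>\<in>space M. c0 < \<bar>Y 1 \<omega>\<bar>}"
    by (rule finite_measure_mono) measurable
  then have "\<alpha> \<le> measure M {\<omega>\<in>space M. c0 < \<bar>Y 1 \<omega>\<bar>}"
    using Xs_large[of k] by linarith
  with c0[OF market_setting_terminal_in_K10[OF ms Y]] \<open>\<alpha> > 0\<close> show False by linarith
qed

theorem proposition4p3:
  fixes M :: "'a measure" and Fl :: "real \<Rightarrow> 'a measure"
    and I :: "real set" and \<A> :: "nat \<Rightarrow> real set set" and \<X> :: "real set \<Rightarrow> 'a proc set"
  assumes "market_setting M Fl I \<A> \<X>"
  shows "NAA1 M \<A> \<X> \<longleftrightarrow> NUPBR M Fl \<A> \<X>"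
  using NUPBR_imp_NAA1[OF assms] not_NUPBR_imp_AA1[OF assms] unfolding NAA1_def by blast

end
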